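(* If $\{P^{a,n}\}_{(a,n)\in\mathcal I\times\mathbb Z}$ and $\{Q^{a,n}\}_{(a,n)\in\mathcal I\times\mathbb Z}$ are collections of polynomials in $\mathcal O$ with widening gap, then the collection $\Big\{\sum_{(b,m)\in\mathcal I\times\mathbb Z}P^{b,m}\,\frac{\partial Q^{a,n}}{\partial X^{b,m}}\Big\}_{(a,n)\in\mathcal I\times\mathbb Z}$ has widening gap (and hence, given a further collection $\{R^{a,n}\}$ with widening gap, so does $\big\{\sum_{(b,m),(c,p)}P^{b,m}\frac{\partial Q^{c,p}}{\partial X^{b,m}}\frac{\partial R^{a,n}}{\partial X^{c,p}}\big\}_{(a,n)}$, and so on).
   Context: $\mathcal I$ is a finite index set and $\mathcal O=\mathbb C[X^{a,n}]_{(a,n)\in\mathcal I\times\mathbb Z}$. A collection $\{P^{a,n}\}_{(a,n)\in\mathcal I\times\mathbb Z}$ of polynomials in $\mathcal O$ has widening gap if, for every $K\ge1$, $P^{a,n}\in\mathbb C[X^{b,m}:|m|<|n|-K,\ b\in\mathcal I]$ for all $a\in\mathcal I$, for all but finitely many $n\in\mathbb Z$. (Each sum over $(b,m)$ above has only finitely many nonzero terms since $Q^{a,n}$ is a polynomial.) *)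

theory Defs
  imports Complex_Main "HOL-Library.Poly_Mapping" "HOL-Library.Groups_Big_Fun"
begin

text \<open>Polynomials with complex coefficients in variables of type 'v:
  finitely supported maps from monomials (finitely supported exponent vectors)
  to coefficients.  Multiplication is the convolution product of Poly_Mapping.\<close>
type_synonym 'v cpoly = "('v \<Rightarrow>\<^sub>0 nat) \<Rightarrow>\<^sub>0 complex"

definition pvars :: "'v cpoly \<Rightarrow> 'v set" where
  "pvars p = \<Union> (Poly_Mapping.keys ` Poly_Mapping.keys p)"

definition pdiff :: "'v \<Rightarrow> 'v cpoly \<Rightarrow> 'v cpoly" where
  "pdiff v p = (\<Sum>mon \<in> Poly_Mapping.keys p.
      Poly_Mapping.single (mon - Poly_Mapping.single v 1)
        (of_nat (Poly_Mapping.lookup mon v) * Poly_Mapping.lookup p mon))"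

text \<open>Widening gap for a family indexed by I x Z (variables X^(b,m), (b,m) in I x Z).
  P^(a,n) lies in C[X^(b,m) : |m| < |n| - K] iff all its variables have |m| < |n| - K.\<close>
definition widening_gap :: "('i \<times> int \<Rightarrow> ('i \<times> int) cpoly) \<Rightarrow> bool" where
  "widening_gap P \<longleftrightarrow>
     (\<forall>K::int. K \<ge> 1 \<longrightarrow>
        finite {n::int. \<not> (\<forall>a. pvars (P (a, n)) \<subseteq> {(b, m). \<bar>m\<bar> < \<bar>n\<bar> - K})})"

end

theory Submission
  imports Defs
begin

text \<open>Apart from finitely many indices m, every variable X(b',m') of P(b,m) has |m'| < |m|;
  as the first index ranges over a finite set, a single constant C then bounds |m'| - |m| for
  all variables X(b',m') of all P(b,m). A variable of \<Sum>v P(v) \<partial>Q(a,n)/\<partial>X(v) is a variable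
  of Q(a,n) or of some P(v) with X(v) occurring in Q(a,n), so this polynomial has gap K whenever
  Q(a,n) has gap K + C.\<close>

lemma finite_pvars: "finite (pvars p)"
  unfolding pvars_def by auto

lemma pvars_zero [simp]: "pvars 0 = {}"
  unfolding pvars_def by simp

lemma pvars_sum: "pvars (sum f A) \<subseteq> (\<Union>x\<in>A. pvars (f x))"
  unfolding pvars_def using keys_sum[of f A] by blast

lemma pvars_Sum_any: "pvars (Sum_any f) \<subseteq> (\<Union>x. pvars (f x))"
  using pvars_sum[of f "{a. f a \<noteq> 0}"] by (auto simp: Sum_any.expand_set)

lemma pvars_mult: "pvars (p * q) \<subseteq> pvars p \<union> pvars q"
proof
  fix v assume "v \<in> pvars (p * q)"
  then obtain mon where mon: "mon \<in> Poly_Mapping.keys (p * q)" "v \<in> Poly_Mapping.keys mon"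
    unfolding pvars_def by auto
  then obtain s t where "mon = s + t" "s \<in> Poly_Mapping.keys p" "t \<in> Poly_Mapping.keys q"
    using keys_mult[of p q] by blast
  with mon(2) keys_add[of s t] show "v \<in> pvars p \<union> pvars q"
    unfolding pvars_def by blast
qed

lemma pvars_pdiff: "pvars (pdiff v p) \<subseteq> pvars p"
proof -
  have single_bound:
    "pvars (Poly_Mapping.single (mon - Poly_Mapping.single v 1) c) \<subseteq> Poly_Mapping.keys mon"
    for mon :: "'a \<Rightarrow>\<^sub>0 nat" and c :: complex
    unfolding pvars_def by (auto simp: in_keys_iff lookup_minus)
  have "pvars (pdiff v p) \<subseteq> (\<Union>mon\<in>Poly_Mapping.keys p.
      pvars (Poly_Mapping.single (mon - Poly_Mapping.single v 1)
        (of_nat (Poly_Mapping.lookup mon v) * Poly_Mapping.lookup p mon)))"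
    unfolding pdiff_def by (rule pvars_sum)
  also have "\<dots> \<subseteq> (\<Union>mon\<in>Poly_Mapping.keys p. Poly_Mapping.keys mon)"
    using single_bound by (rule UN_mono[OF order_refl])
  also have "\<dots> = pvars p"
    unfolding pvars_def by blast
  finally show ?thesis .
qed

lemma pdiff_eq_0: "v \<notin> pvars p \<Longrightarrow> pdiff v p = 0"
  unfolding pdiff_def pvars_def by (intro sum.neutral) (auto simp: in_keys_iff)

lemma pvars_Sum_any_mult_pdiff:
  "pvars (\<Sum>v. P v * pdiff v q) \<subseteq> pvars q \<union> (\<Union>v\<in>pvars q. pvars (P v))"
proof
  fix w assume "w \<in> pvars (\<Sum>v. P v * pdiff v q)"
  then obtain v where w: "w \<in> pvars (P v * pdiff v q)"
    using pvars_Sum_any[of "\<lambda>v. P v * pdiff v q"] by blast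
  have "v \<in> pvars q"
  proof (rule ccontr)
    assume "v \<notin> pvars q"
    with w show False
      by (simp add: pdiff_eq_0)
  qed
  moreover have "w \<in> pvars (P v) \<union> pvars (pdiff v q)"
    using w by (rule subsetD[OF pvars_mult])
  ultimately show "w \<in> pvars q \<union> (\<Union>v\<in>pvars q. pvars (P v))"
    using pvars_pdiff[of v q] by blast
qed

lemma widening_gap_obtains_index_bound:
  fixes P :: "('i::finite) \<times> int \<Rightarrow> ('i \<times> int) cpoly"
  assumes "widening_gap P"
  obtains C where "C \<ge> 0" "\<And>v w. w \<in> pvars (P v) \<Longrightarrow> \<bar>snd w\<bar> \<le> \<bar>snd v\<bar> + C"
proof -
  define E where "E = {m. \<not> (\<forall>b. pvars (P (b, m)) \<subseteq> {(b', m'). \<bar>m'\<bar> < \<bar>m\<bar> - 1})}"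
  define S where "S = (\<Union>m\<in>E. \<Union>b. pvars (P (b, m)))"
  define C where "C = (\<Sum>w\<in>S. \<bar>snd w\<bar>)"
  have "finite E"
    using assms unfolding widening_gap_def E_def by auto
  then have "finite S"
    unfolding S_def by (auto intro: finite_pvars)
  have "C \<ge> 0"
    unfolding C_def by (simp add: sum_nonneg)
  moreover have "\<bar>snd w\<bar> \<le> \<bar>snd v\<bar> + C" if w: "w \<in> pvars (P v)" for v w
  proof -
    obtain b m where v: "v = (b, m)" by fastforce
    show ?thesis
    proof (cases "m \<in> E")
      case True
      then have "w \<in> S"
        using w v unfolding S_def by blast
      then have "\<bar>snd w\<bar> \<le> C"
        unfolding C_def using \<open>finite S\<close> by (intro member_le_sum) auto
      then show ?thesis by simp
    next
      case False
      then have "w \<in> {(b', m'). \<bar>m'\<bar> < \<bar>m\<bar> - 1}"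
        using w v unfolding E_def by blast
      then show ?thesis
        using v \<open>C \<ge> 0\<close> by (cases w) simp
    qed
  qed
  ultimately show thesis
    using that by blast
qed

theorem corollary3p2:
  fixes P Q :: "('i::finite) \<times> int \<Rightarrow> ('i \<times> int) cpoly"
  assumes "widening_gap P" and "widening_gap Q"
  shows "widening_gap (\<lambda>(a, n). \<Sum>v. P v * pdiff v (Q (a, n)))"
proof -
  obtain C where "C \<ge> 0" and C: "\<And>v w. w \<in> pvars (P v) \<Longrightarrow> \<bar>snd w\<bar> \<le> \<bar>snd v\<bar> + C"
    using widening_gap_obtains_index_bound[OF assms(1)] by blast
  show ?thesis
    unfolding widening_gap_def
  proof (intro allI impI)
    fix K :: int assume "K \<ge> 1"
    have gap: "pvars (\<Sum>v. P v * pdiff v (Q (a, n))) \<subseteq> {(b, m). \<bar>m\<bar> < \<bar>n\<bar> - K}"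
      if Q_gap: "pvars (Q (a, n)) \<subseteq> {(b, m). \<bar>m\<bar> < \<bar>n\<bar> - (K + C)}" for a n
    proof -
      have "\<bar>snd w\<bar> < \<bar>n\<bar> - K" if "w \<in> pvars (P v)" "v \<in> pvars (Q (a, n))" for v w
        using C[OF that(1)] that(2) Q_gap by fastforce
      with Q_gap \<open>C \<ge> 0\<close> pvars_Sum_any_mult_pdiff[of P "Q (a, n)"] show ?thesis
        by fastforce
    qed
    have "finite {n. \<not> (\<forall>a. pvars (Q (a, n)) \<subseteq> {(b, m). \<bar>m\<bar> < \<bar>n\<bar> - (K + C)})}"
      using assms(2) \<open>K \<ge> 1\<close> \<open>C \<ge> 0\<close> unfolding widening_gap_def by simp
    then show "finite {n. \<not> (\<forall>a. pvars ((\<lambda>(a, n). \<Sum>v. P v * pdiff v (Q (a, n))) (a, n))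
        \<subseteq> {(b, m). \<bar>m\<bar> < \<bar>n\<bar> - K})}"
      by (rule finite_subset[rotated]) (use gap in auto)
  qed
qed

end
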